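(* Let $\mathcal{X}$ be a finite set and $\underline{T}$ a lower transition operator on $\mathcal{L}(\mathcal{X})$. Let $\mathcal{X}'_{\mathrm{RA}}\coloneqq\{x\in\mathcal{X}\colon\exists n\in\mathbb{N}\ \forall k\ge n,\ \min\overline{T}^k\mathbb{I}_x>0\}$. Then $\underline{T}$ is regularly absorbing if and only if $\mathcal{X}'_{\mathrm{RA}}\neq\emptyset$ and for every $x\in\mathcal{X}\setminus\mathcal{X}'_{\mathrm{RA}}$ there is $n\in\mathbb{N}$ with $\overline{T}^n\mathbb{I}_{\mathcal{X}\setminus\mathcal{X}'_{\mathrm{RA}}}(x)<1$. Furthermore, $\mathcal{X}'_{\mathrm{RA}}=\mathcal{X}_{\mathrm{RA}}$.
   Context: $\mathcal{L}(\mathcal{X})$ is the set of real-valued functions on $\mathcal{X}$ with pointwise operations and order, real constants identified with constant functions, $\mathbb{I}_A$ the indicator of $A\subseteq\mathcal{X}$, $\mathbb{I}_x\coloneqq\mathbb{I}_{\{x\}}$; $\mathbb{N}=\{1,2,\dots\}$. A lower transition operator is a map $\underline{T}\colon\mathcal{L}(\mathcal{X})\to\mathcal{L}(\mathcal{X})$ such that for all $f,g$ and $\lambda\ge0$: $\underline{T}f\ge\min f$; $\underline{T}(f+g)\ge\underline{T}f+\underline{T}g$; $\underline{T}(\lambda f)=\lambda\underline{T}f$. Its upper transition operator is $\overline{T}f\coloneqq-\underline{T}(-f)$; powers denote composition. $\mathcal{X}_{\mathrm{RA}}\coloneqq\{x\in\mathcal{X}\colon\exists n\in\mathbb{N},\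 \min\overline{T}^n\mathbb{I}_x>0\}$, and $\underline{T}$ is regularly absorbing if $\mathcal{X}_{\mathrm{RA}}\ne\emptyset$ and for every $x\in\mathcal{X}\setminus\mathcal{X}_{\mathrm{RA}}$ there is $n\in\mathbb{N}$ with $\underline{T}^n\mathbb{I}_{\mathcal{X}_{\mathrm{RA}}}(x)>0$. *)

theory Defs
  imports Complex_Main
begin

definition fmin :: "('x::finite \<Rightarrow> real) \<Rightarrow> real" where
  "fmin f = Min (range f)"

definition ind :: "'x set \<Rightarrow> 'x \<Rightarrow> real" where
  "ind A = (\<lambda>y. if y \<in> A then 1 else 0)"

definition lower_transition_operator :: "(('x::finite \<Rightarrow> real) \<Rightarrow> ('x \<Rightarrow> real)) \<Rightarrow> bool" where
  "lower_transition_operator T \<longleftrightarrow>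
     (\<forall>f. \<forall>x. T f x \<ge> fmin f) \<and>
     (\<forall>f g. \<forall>x. T (\<lambda>y. f y + g y) x \<ge> T f x + T g x) \<and>
     (\<forall>f (c::real). c \<ge> 0 \<longrightarrow> T (\<lambda>y. c * f y) = (\<lambda>x. c * T f x))"

definition upper_op :: "(('x \<Rightarrow> real) \<Rightarrow> ('x \<Rightarrow> real)) \<Rightarrow> ('x \<Rightarrow> real) \<Rightarrow> ('x \<Rightarrow> real)" where
  "upper_op T f = (\<lambda>x. - T (\<lambda>y. - f y) x)"

definition X_RA :: "(('x::finite \<Rightarrow> real) \<Rightarrow> ('x \<Rightarrow> real)) \<Rightarrow> 'x set" where
  "X_RA T = {x. \<exists>n::nat. n \<ge> 1 \<and> fmin ((upper_op T ^^ n) (ind {x})) > 0}"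

definition regularly_absorbing :: "(('x::finite \<Rightarrow> real) \<Rightarrow> ('x \<Rightarrow> real)) \<Rightarrow> bool" where
  "regularly_absorbing T \<longleftrightarrow> X_RA T \<noteq> {} \<and>
     (\<forall>x \<in> - X_RA T. \<exists>n::nat. n \<ge> 1 \<and> (T ^^ n) (ind (X_RA T)) x > 0)"

definition X_RA' :: "(('x::finite \<Rightarrow> real) \<Rightarrow> ('x \<Rightarrow> real)) \<Rightarrow> 'x set" where
  "X_RA' T = {x. \<exists>n::nat. n \<ge> 1 \<and> (\<forall>k\<ge>n. fmin ((upper_op T ^^ k) (ind {x})) > 0)}"

end

theory Submission
  imports Defs
begin

text \<open>The upper operator U is monotone and fixes constants, so \<open>min (U^n f)\<close> is
  nondecreasing in n: once \<open>min (U^n I_x) > 0\<close>, the same holds for all later powers,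
  which gives X'_RA = X_RA. By conjugacy, \<open>U^n (1 - f) = 1 - T^n f\<close>, so
  \<open>U^n I_(-X_RA) x < 1\<close> is exactly the condition \<open>T^n I_X_RA x > 0\<close> of regular absorption.\<close>

lemma fmin_le: "fmin f \<le> f y"
  unfolding fmin_def by (rule Min_le) auto

lemma fmin_greatest: "(\<And>y. c \<le> f y) \<Longrightarrow> c \<le> fmin (f :: 'x::finite \<Rightarrow> real)"
  unfolding fmin_def by (subst Min_ge_iff) auto

lemma fmin_const: "fmin (\<lambda>_::'x::finite. c) = c"
  by (metis fmin_greatest fmin_le order_antisym order_refl)

lemma ind_Compl: "ind (- A) = (\<lambda>y. 1 - ind A y)"
  unfolding ind_def by auto

locale lower_transition =
  fixes T :: "('x::finite \<Rightarrow> real) \<Rightarrow> ('x \<Rightarrow> real)"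
  assumes lower_transition_operator: "lower_transition_operator T"
begin

lemma bounded_below: "fmin f \<le> T f x"
  using lower_transition_operator unfolding lower_transition_operator_def by blast

lemma superadditive: "T f x + T g x \<le> T (\<lambda>y. f y + g y) x"
  using lower_transition_operator unfolding lower_transition_operator_def by blast

lemma pos_homogeneous: "c \<ge> 0 \<Longrightarrow> T (\<lambda>y. c * f y) = (\<lambda>x. c * T f x)"
  using lower_transition_operator unfolding lower_transition_operator_def by blast

lemma zero: "T (\<lambda>_. 0) x = 0"
  using pos_homogeneous[of 0 "\<lambda>_. 0"] by (simp add: fun_eq_iff)

lemma const: "T (\<lambda>_. c) x = c"
proof -
  have "c \<le> T (\<lambda>_. c) x" "- c \<le> T (\<lambda>_. - c) x"
    using bounded_below[of "\<lambda>_. c"] bounded_below[of "\<lambda>_. - c"] by (simp_all add: fmin_const)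
  moreover have "T (\<lambda>_. c) x + T (\<lambda>_. - c) x \<le> 0"
    using superadditive[of "\<lambda>_. c" x "\<lambda>_. - c"] by (simp add: zero)
  ultimately show ?thesis by linarith
qed

lemma add_const: "T (\<lambda>y. f y + c) x = T f x + c"
  using superadditive[of f x "\<lambda>_. c"] superadditive[of "\<lambda>y. f y + c" x "\<lambda>_. - c"]
  by (simp add: const)

lemma mono: "(\<And>y. f y \<le> g y) \<Longrightarrow> T f x \<le> T g x"
proof -
  assume "\<And>y. f y \<le> g y"
  then have "0 \<le> T (\<lambda>y. g y - f y) x"
    using bounded_below[of "\<lambda>y. g y - f y" x] fmin_greatest[of 0 "\<lambda>y. g y - f y"] by force
  then show ?thesis
    using superadditive[of f x "\<lambda>y. g y - f y"] by simp
qed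

lemma upper_mono: "(\<And>y. f y \<le> g y) \<Longrightarrow> upper_op T f x \<le> upper_op T g x"
  unfolding upper_op_def using mono[of "\<lambda>y. - g y" "\<lambda>y. - f y" x] by simp

lemma upper_const: "upper_op T (\<lambda>_. c) = (\<lambda>_. c)"
  unfolding upper_op_def using const[of "- c"] by simp

lemma upper_funpow_mono: "(\<And>y. f y \<le> g y) \<Longrightarrow> (upper_op T ^^ n) f x \<le> (upper_op T ^^ n) g x"
  by (induction n arbitrary: x) (simp_all add: upper_mono)

lemma upper_funpow_const: "(upper_op T ^^ n) (\<lambda>_. c) = (\<lambda>_. c)"
  by (induction n) (simp_all add: upper_const)

lemma upper_funpow_one_minus: "(upper_op T ^^ n) (\<lambda>y. 1 - f y) = (\<lambda>x. 1 - (T ^^ n) f x)"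
proof (induction n)
  case 0
  then show ?case by simp
next
  case (Suc n)
  have "upper_op T (\<lambda>x. 1 - (T ^^ n) f x) = (\<lambda>x. 1 - T ((T ^^ n) f) x)"
    unfolding upper_op_def using add_const[of "(T ^^ n) f" "- 1"] by (simp add: fun_eq_iff)
  with Suc show ?case by simp
qed

lemma fmin_upper_funpow_mono:
  assumes "n \<le> k"
  shows "fmin ((upper_op T ^^ n) f) \<le> fmin ((upper_op T ^^ k) f)"
proof (rule fmin_greatest)
  fix y
  let ?c = "fmin ((upper_op T ^^ n) f)"
  have "?c = (upper_op T ^^ (k - n)) (\<lambda>_. ?c) y"
    by (simp add: upper_funpow_const)
  also have "\<dots> \<le> (upper_op T ^^ (k - n)) ((upper_op T ^^ n) f) y"
    by (rule upper_funpow_mono) (rule fmin_le)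
  also have "\<dots> = (upper_op T ^^ k) f y"
    using assms funpow_add[of "k - n" n "upper_op T"] by simp
  finally show "?c \<le> (upper_op T ^^ k) f y" .
qed

lemma X_RA'_eq_X_RA: "X_RA' T = X_RA T"
proof
  show "X_RA' T \<subseteq> X_RA T"
    unfolding X_RA'_def X_RA_def by auto
  show "X_RA T \<subseteq> X_RA' T"
  proof
    fix x
    assume "x \<in> X_RA T"
    then obtain n where "n \<ge> 1" and "0 < fmin ((upper_op T ^^ n) (ind {x}))"
      unfolding X_RA_def by auto
    then have "\<forall>k\<ge>n. 0 < fmin ((upper_op T ^^ k) (ind {x}))"
      using fmin_upper_funpow_mono less_le_trans by blast
    with \<open>n \<ge> 1\<close> show "x \<in> X_RA' T"
      unfolding X_RA'_def by auto
  qed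
qed

end

theorem lemma1:
  fixes T :: "('x::finite \<Rightarrow> real) \<Rightarrow> ('x \<Rightarrow> real)"
  assumes "lower_transition_operator T"
  shows "(regularly_absorbing T \<longleftrightarrow>
           X_RA' T \<noteq> {} \<and>
           (\<forall>x \<in> - X_RA' T. \<exists>n::nat. n \<ge> 1 \<and> (upper_op T ^^ n) (ind (- X_RA' T)) x < 1))
         \<and> X_RA' T = X_RA T"
proof -
  interpret lower_transition T
    using assms by unfold_locales
  have "(upper_op T ^^ n) (ind (- X_RA T)) x < 1 \<longleftrightarrow> 0 < (T ^^ n) (ind (X_RA T)) x" for n x
    by (simp add: ind_Compl upper_funpow_one_minus)
  then show ?thesis
    unfolding X_RA'_eq_X_RA regularly_absorbing_def by simp
qed

end
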